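(* Let $\varphi$ be an endomorphism of a periodic abelian group $A$. The following are equivalent: (MF) there is a subgroup $A_0$ of finite index in $A$ on which $\varphi$ acts as a multiplication; (FM) there is a finite $\varphi$-invariant subgroup $A_1$ of $A$ such that $\varphi$ induces a multiplication on $A/A_1$.
   Context: Abelian groups are written additively. On a periodic abelian group, a multiplication is the componentwise action of an element $\alpha=(\alpha_p)_p\in\prod_p\mathbb{Z}_p$ ($\mathbb{Z}_p$ the $p$-adic integers), $\alpha_p$ acting on the $p$-primary component in the natural way. "$\varphi$ acts as a multiplication on $A_0$" means $\varphi(a)=\alpha a$ for all $a\in A_0$, for some such $\alpha$. *)

theory Defs
  imports "HOL-Algebra.Algebra" "HOL-Number_Theory.Number_Theory"
begin

text \<open>The p-adic integers Z_p, represented as the inverse limit of the rings Z/p^k: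
  a compatible sequence of residues x k in [0, p^k).\<close>
definition padic_int :: "nat \<Rightarrow> (nat \<Rightarrow> int) \<Rightarrow> bool" where
  "padic_int p x \<longleftrightarrow>
     (\<forall>k. 0 \<le> x k \<and> x k < int p ^ k \<and> x (Suc k) mod (int p ^ k) = x k)"

definition padic_scalar :: "(nat \<Rightarrow> nat \<Rightarrow> int) \<Rightarrow> bool" where
  "padic_scalar \<alpha> \<longleftrightarrow> (\<forall>p::nat. Factorial_Ring.prime p \<longrightarrow> padic_int p (\<alpha> p))"

text \<open>Natural action of alpha on an element a of finite order n = prod p^(e_p) of a
  (multiplicatively written) abelian group: alpha_p acts on the p-primary component
  (of order p^(e_p)) as multiplication by alpha_p mod p^(e_p); altogether this is
  the power a^k for any integer k with k = alpha_p(e_p) mod p^(e_p) for all p | n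
  (such k exists by CRT, and a^k does not depend on its choice).\<close>
definition padic_mult :: "('a, 'b) monoid_scheme \<Rightarrow> (nat \<Rightarrow> nat \<Rightarrow> int) \<Rightarrow> 'a \<Rightarrow> 'a" where
  "padic_mult G \<alpha> a =
     (let n = group.ord G a in
      a [^]\<^bsub>G\<^esub> (SOME k::int. \<forall>p\<in>prime_factors n.
         [k = \<alpha> p (multiplicity p n)] (mod (int p ^ multiplicity p n))))"

definition periodic_group :: "('a, 'b) monoid_scheme \<Rightarrow> bool" where
  "periodic_group G \<longleftrightarrow> (\<forall>a\<in>carrier G. group.ord G a \<noteq> 0)"

end

theory Submission
  imports Defs
begin

text \<open>Multiplication by \<open>\<alpha>\<close> is an endomorphism of a periodic abelian group that commutes with
  every homomorphism, in particular with every endomorphism \<open>\<phi>\<close> and every quotient map; on an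
  element of order \<open>n\<close> it is the power by an integer representing \<open>\<alpha>\<close> modulo \<open>n\<close>. Hence
  \<open>\<psi> = \<phi> - \<alpha>\<close> is an endomorphism commuting with \<open>\<phi>\<close>, and both conditions say that \<open>\<psi>\<close> has small
  image: (MF) says that \<open>\<psi>\<close> vanishes on a subgroup of finite index, so its image \<open>A\<^sub>1\<close> is
  finite, \<open>\<phi>\<close>-invariant, and \<open>\<phi> = \<alpha>\<close> modulo \<open>A\<^sub>1\<close>; (FM) says that \<open>\<psi>\<close> takes values in a
  finite subgroup, so its kernel, on which \<open>\<phi> = \<alpha>\<close>, has finite index.\<close>

definition padic_residue :: "(nat \<Rightarrow> nat \<Rightarrow> int) \<Rightarrow> nat \<Rightarrow> int \<Rightarrow> bool" where
  "padic_residue \<alpha> n k \<longleftrightarrow> (\<forall>p\<in>prime_factors n.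
     [k = \<alpha> p (multiplicity p n)] (mod (int p ^ multiplicity p n)))"

lemma padic_residue_exists: "\<exists>k. padic_residue \<alpha> n k"
proof -
  let ?m = "\<lambda>p. p ^ multiplicity p n"
  let ?u = "\<lambda>p. nat (\<alpha> p (multiplicity p n) mod int (?m p))"
  have pairwise_coprime: "\<forall>p\<in>prime_factors n. \<forall>q\<in>prime_factors n. p \<noteq> q \<longrightarrow> coprime (?m p) (?m q)"
    by (auto intro!: coprime_power_left_iff[THEN iffD2] coprime_power_right_iff[THEN iffD2] primes_coprime)
  obtain x where x: "\<forall>p\<in>prime_factors n. [x = ?u p] (mod ?m p)"
    using chinese_remainder_nat[OF _ pairwise_coprime, of ?u] by auto
  have "padic_residue \<alpha> n (int x)"
    unfolding padic_residue_def
  proof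
    fix p assume p: "p \<in> prime_factors n"
    then have "[int x = int (?u p)] (mod int (?m p))"
      using x cong_int_iff by blast
    moreover have "int (?u p) = \<alpha> p (multiplicity p n) mod int (?m p)"
      using p by (simp add: prime_factors_gt_0_nat)
    ultimately show "[int x = \<alpha> p (multiplicity p n)] (mod (int p ^ multiplicity p n))"
      by (simp add: cong_def)
  qed
  then show ?thesis ..
qed

lemma cong_if_cong_prime_power_factors:
  fixes k k' :: int
  assumes "n > 0" "\<forall>p\<in>prime_factors n. [k = k'] (mod (int p ^ multiplicity p n))"
  shows "[k = k'] (mod int n)"
proof -
  have "[k = k'] (mod (\<Prod>p\<in>prime_factors n. int p ^ multiplicity p n))"
    using assms(2) by (intro cong_cong_prod_coprime)
      (auto intro!: coprime_power_left_iff[THEN iffD2] coprime_power_right_iff[THEN iffD2] primes_coprime)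
  moreover have "(\<Prod>p\<in>prime_factors n. int p ^ multiplicity p n) = int n"
  proof -
    have "int (\<Prod>p\<in>prime_factors n. p ^ multiplicity p n) = int n"
      using prod_prime_factors[of n] assms(1) by simp
    then show ?thesis by (simp add: of_nat_prod)
  qed
  ultimately show ?thesis by simp
qed

lemma padic_int_cong:
  assumes "padic_int p x" "j \<le> k"
  shows "[x k = x j] (mod int p ^ j)"
  using assms(2)
proof (induction k rule: dec_induct)
  case (step k)
  have "[x (Suc k) = x k] (mod int p ^ k)"
    using assms(1) unfolding padic_int_def cong_def by (metis mod_mod_trivial)
  then have "[x (Suc k) = x k] (mod int p ^ j)"
    by (rule cong_dvd_modulus) (simp add: step.hyps le_imp_power_dvd)
  then show ?case using step.IH by (rule cong_trans)
qed simp

lemma padic_residue_dvd: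
  assumes "padic_scalar \<alpha>" "m dvd n" "n > 0" "padic_residue \<alpha> n k"
  shows "padic_residue \<alpha> m k"
  unfolding padic_residue_def
proof
  fix p assume p: "p \<in> prime_factors m"
  then have "p \<in> prime_factors n" and prime: "Factorial_Ring.prime p"
    using assms(2,3) by (auto simp: in_prime_factors_iff intro: dvd_trans)
  have le: "multiplicity p m \<le> multiplicity p n"
    using dvd_imp_multiplicity_le assms(2,3) by auto
  have "[k = \<alpha> p (multiplicity p n)] (mod (int p ^ multiplicity p n))"
    using assms(4) \<open>p \<in> prime_factors n\<close> unfolding padic_residue_def by blast
  then have "[k = \<alpha> p (multiplicity p n)] (mod (int p ^ multiplicity p m))"
    by (rule cong_dvd_modulus) (simp add: le le_imp_power_dvd)
  moreover have "[\<alpha> p (multiplicity p n) = \<alpha> p (multiplicity p m)] (mod (int p ^ multiplicity p m))"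
    using assms(1) prime padic_int_cong[OF _ le] unfolding padic_scalar_def by simp
  ultimately show "[k = \<alpha> p (multiplicity p m)] (mod (int p ^ multiplicity p m))"
    by (rule cong_trans)
qed

lemma (in group) padic_mult_eq_int_pow:
  assumes "padic_scalar \<alpha>" "x \<in> carrier G" "ord x dvd n" "n > 0" "padic_residue \<alpha> n k"
  shows "padic_mult G \<alpha> x = x [^] k"
proof -
  have ord: "ord x > 0" using assms(3,4) by (metis dvd_0_left_iff not_gr0)
  define k0 where "k0 = (SOME k. padic_residue \<alpha> (ord x) k)"
  have "padic_residue \<alpha> (ord x) k0"
    unfolding k0_def using padic_residue_exists by (rule someI_ex)
  moreover have "padic_residue \<alpha> (ord x) k"
    using padic_residue_dvd[OF assms(1,3,4,5)] .
  ultimately have "[k0 = k] (mod int (ord x))"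
    using cong_if_cong_prime_power_factors[OF ord]
    unfolding padic_residue_def by (meson cong_sym cong_trans)
  then have "x [^] k0 = x [^] k"
    using int_pow_eq[OF assms(2)] by (simp add: cong_iff_dvd_diff dvd_diff_commute)
  then show ?thesis
    unfolding padic_mult_def k0_def padic_residue_def Let_def by simp
qed

lemma (in group_hom) ord_hom_dvd:
  assumes "x \<in> carrier G"
  shows "group.ord H (h x) dvd group.ord G x"
proof -
  have "h x [^]\<^bsub>H\<^esub> G.ord x = h (x [^] G.ord x)"
    using hom_nat_pow[OF assms] by simp
  also have "\<dots> = \<one>\<^bsub>H\<^esub>" using assms by simp
  finally show ?thesis using H.pow_eq_id assms by simp
qed

locale padic_multiplication = comm_group G for G (structure) +
  fixes \<alpha> :: "nat \<Rightarrow> nat \<Rightarrow> int"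
  assumes periodic: "periodic_group G" and scalar: "padic_scalar \<alpha>"
begin

lemma ord_pos: "a \<in> carrier G \<Longrightarrow> ord a > 0"
  using periodic unfolding periodic_group_def by blast

lemma padic_mult_eq_residue_pow:
  assumes "a \<in> carrier G" "padic_residue \<alpha> (ord a) k"
  shows "padic_mult G \<alpha> a = a [^] k"
  using padic_mult_eq_int_pow[OF scalar assms(1) dvd_refl ord_pos[OF assms(1)] assms(2)] .

lemma padic_mult_closed: "a \<in> carrier G \<Longrightarrow> padic_mult G \<alpha> a \<in> carrier G"
  using padic_mult_eq_residue_pow padic_residue_exists by (metis int_pow_closed)

lemma padic_mult_mult:
  assumes "a \<in> carrier G" "b \<in> carrier G"
  shows "padic_mult G \<alpha> (a \<otimes> b) = padic_mult G \<alpha> a \<otimes> padic_mult G \<alpha> b"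
proof -
  let ?n = "ord a * ord b"
  have n: "?n > 0" using ord_pos assms by simp
  obtain k where k: "padic_residue \<alpha> ?n k" using padic_residue_exists by blast
  have "padic_mult G \<alpha> (a \<otimes> b) = (a \<otimes> b) [^] k"
    using padic_mult_eq_int_pow[OF scalar _ abelian_ord_mul_divides[OF assms] n k] assms by simp
  also have "\<dots> = a [^] k \<otimes> b [^] k"
    using int_pow_distrib assms by simp
  also have "\<dots> = padic_mult G \<alpha> a \<otimes> padic_mult G \<alpha> b"
    using padic_mult_eq_int_pow[OF scalar _ _ n k] assms by simp
  finally show ?thesis .
qed

lemma padic_mult_hom: "padic_mult G \<alpha> \<in> hom G G"
  by (rule homI) (simp_all add: padic_mult_closed padic_mult_mult)

lemma hom_padic_mult:
  assumes "group H" "f \<in> hom G H" "a \<in> carrier G"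
  shows "padic_mult H \<alpha> (f a) = f (padic_mult G \<alpha> a)"
proof -
  interpret f: group_hom G H f
    using assms by (simp add: group_hom_def group_hom_axioms_def is_group)
  obtain k where k: "padic_residue \<alpha> (ord a) k"
    using padic_residue_exists by blast
  have "padic_mult H \<alpha> (f a) = f a [^]\<^bsub>H\<^esub> k"
    using f.H.padic_mult_eq_int_pow[OF scalar _ f.ord_hom_dvd ord_pos k] assms(3) by simp
  also have "\<dots> = f (a [^] k)"
    using f.hom_int_pow assms(3) by simp
  also have "\<dots> = f (padic_mult G \<alpha> a)"
    using padic_mult_eq_residue_pow assms(3) k by simp
  finally show ?thesis .
qed

lemma padic_mult_FactGroup:
  assumes "subgroup N G" "a \<in> carrier G"
  shows "padic_mult (G Mod N) \<alpha> (N #> a) = N #> padic_mult G \<alpha> a"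
proof -
  interpret normal N G using subgroup_imp_normal assms(1) by blast
  show ?thesis
    using hom_padic_mult[OF factorgroup_is_group r_coset_hom_Mod assms(2)] .
qed

end

lemma (in group_hom) image_rcoset_of_subset_kernel:
  assumes "subgroup K G" "K \<subseteq> kernel G H h" "g \<in> carrier G"
  shows "h ` (K #> g) = {h g}"
proof -
  have "h (k \<otimes> g) = h g" if "k \<in> K" for k
    using that assms subgroup.mem_carrier[OF assms(1)] by (auto simp: kernel_def)
  then have "h ` (K #> g) \<subseteq> {h g}"
    unfolding r_coset_def by auto
  moreover have "h g \<in> h ` (K #> g)"
    using G.rcos_self[OF assms(3,1)] by (rule imageI)
  ultimately show ?thesis by blast
qed

lemma (in group_hom) image_eq_the_elem_image_rcosets:
  assumes "subgroup K G" "K \<subseteq> kernel G H h"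
  shows "h ` carrier G = (\<lambda>C. the_elem (h ` C)) ` (rcosets\<^bsub>G\<^esub> K)"
proof -
  have "(\<lambda>C. the_elem (h ` C)) ` (rcosets\<^bsub>G\<^esub> K) = (\<lambda>g. the_elem (h ` (K #> g))) ` carrier G"
    unfolding RCOSETS_def by blast
  also have "\<dots> = h ` carrier G"
    using image_rcoset_of_subset_kernel[OF assms] by (intro image_cong) simp_all
  finally show ?thesis ..
qed

lemma (in group_hom) finite_image_if_finite_rcosets:
  assumes "subgroup K G" "K \<subseteq> kernel G H h" "finite (rcosets\<^bsub>G\<^esub> K)"
  shows "finite (h ` carrier G)"
  using image_eq_the_elem_image_rcosets[OF assms(1,2)] assms(3) by simp

lemma (in group_hom) finite_rcosets_kernel_if_finite_image:
  assumes "finite (h ` carrier G)"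
  shows "finite (rcosets\<^bsub>G\<^esub> (kernel G H h))"
proof -
  have "(\<lambda>C. the_elem (h ` C)) ` (rcosets\<^bsub>G\<^esub> (kernel G H h)) = h ` carrier G"
    using image_eq_the_elem_image_rcosets[OF subgroup_kernel] by simp
  moreover have "inj_on (\<lambda>C. the_elem (h ` C)) (rcosets\<^bsub>G\<^esub> (kernel G H h))"
    using FactGroup_inj_on by (simp add: FactGroup_def)
  ultimately show ?thesis
    using assms finite_imageD by metis
qed

locale padic_endomorphism = padic_multiplication +
  fixes \<phi> :: "'a \<Rightarrow> 'a"
  assumes endo: "\<phi> \<in> hom G G"
begin

definition deviation :: "'a \<Rightarrow> 'a" where
  "deviation a = \<phi> a \<otimes> inv (padic_mult G \<alpha> a)"

sublocale deviation: group_hom G G deviation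
proof
  have "(\<lambda>a. inv (padic_mult G \<alpha> a)) \<in> hom G G"
    using padic_mult_hom by (auto simp: hom_def inv_mult padic_mult_closed m_comm)
  then show "deviation \<in> hom G G"
    unfolding deviation_def[abs_def] by (rule hom_group_mult[OF endo])
qed

lemma deviation_eq_one_iff:
  "a \<in> carrier G \<Longrightarrow> deviation a = \<one> \<longleftrightarrow> \<phi> a = padic_mult G \<alpha> a"
  unfolding deviation_def
  using hom_in_carrier[OF endo] padic_mult_closed by (simp add: inv_solve_right')

lemma endo_deviation_commute:
  assumes "a \<in> carrier G"
  shows "\<phi> (deviation a) = deviation (\<phi> a)"
proof -
  interpret \<phi>: group_hom G G \<phi>
    using endo by (simp add: group_hom_def group_hom_axioms_def is_group)
  show ?thesis
    unfolding deviation_def using assms padic_mult_closed hom_padic_mult[OF is_group endo] by simp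
qed

lemma rcoset_eq_iff_deviation_mem:
  assumes "subgroup N G" "a \<in> carrier G"
  shows "N #> \<phi> a = N #> padic_mult G \<alpha> a \<longleftrightarrow> deviation a \<in> N"
proof -
  have "\<phi> a \<in> carrier G" "padic_mult G \<alpha> a \<in> carrier G"
    using assms(2) hom_in_carrier[OF endo] padic_mult_closed by auto
  then show ?thesis
    unfolding deviation_def
    using repr_independence[OF _ _ assms(1)] repr_independenceD[OF assms(1)]
      subgroup.rcos_module[OF assms(1) is_group]
    by metis
qed

lemma multiplication_modulo_finite_if_on_finite_index:
  assumes "subgroup A0 G" "finite (rcosets A0)" "\<forall>a\<in>A0. \<phi> a = padic_mult G \<alpha> a"
  shows "\<exists>A1. subgroup A1 G \<and> finite A1 \<and> \<phi> ` A1 \<subseteq> A1 \<and>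
           (\<forall>a\<in>carrier G. A1 #> \<phi> a = padic_mult (G Mod A1) \<alpha> (A1 #> a))"
proof (intro exI conjI ballI)
  let ?A1 = "deviation ` carrier G"
  show "subgroup ?A1 G"
    by (rule deviation.img_is_subgroup)
  have "A0 \<subseteq> kernel G G deviation"
    using assms(3) subgroup.mem_carrier[OF assms(1)] deviation_eq_one_iff
    by (auto simp: kernel_def)
  then show "finite ?A1"
    by (rule deviation.finite_image_if_finite_rcosets[OF assms(1) _ assms(2)])
  show "\<phi> ` ?A1 \<subseteq> ?A1"
    using endo_deviation_commute hom_in_carrier[OF endo] by auto
  fix a assume "a \<in> carrier G"
  then show "?A1 #> \<phi> a = padic_mult (G Mod ?A1) \<alpha> (?A1 #> a)"
    using padic_mult_FactGroup rcoset_eq_iff_deviation_mem deviation.img_is_subgroup by auto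
qed

lemma multiplication_on_finite_index_if_modulo_finite:
  assumes "subgroup A1 G" "finite A1"
    and "\<forall>a\<in>carrier G. A1 #> \<phi> a = padic_mult (G Mod A1) \<alpha> (A1 #> a)"
  shows "\<exists>A0. subgroup A0 G \<and> finite (rcosets A0) \<and> (\<forall>a\<in>A0. \<phi> a = padic_mult G \<alpha> a)"
proof (intro exI conjI ballI)
  let ?A0 = "kernel G G deviation"
  show "subgroup ?A0 G"
    by (rule deviation.subgroup_kernel)
  have "deviation ` carrier G \<subseteq> A1"
    using assms(1,3) padic_mult_FactGroup rcoset_eq_iff_deviation_mem by auto
  then show "finite (rcosets ?A0)"
    by (intro deviation.finite_rcosets_kernel_if_finite_image finite_subset[OF _ assms(2)])
  show "\<phi> a = padic_mult G \<alpha> a" if "a \<in> ?A0" for a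
    using that deviation_eq_one_iff by (auto simp: kernel_def)
qed

end

theorem proposition2p4:
  fixes G :: "('a, 'b) monoid_scheme" and \<phi> :: "'a \<Rightarrow> 'a"
  assumes "comm_group G"
    and "periodic_group G"
    and "\<phi> \<in> hom G G"
  shows "(\<exists>A0. subgroup A0 G \<and> finite (rcosets\<^bsub>G\<^esub> A0) \<and>
            (\<exists>\<alpha>. padic_scalar \<alpha> \<and> (\<forall>a\<in>A0. \<phi> a = padic_mult G \<alpha> a)))
     \<longleftrightarrow>
         (\<exists>A1. subgroup A1 G \<and> finite A1 \<and> \<phi> ` A1 \<subseteq> A1 \<and>
            (\<exists>\<alpha>. padic_scalar \<alpha> \<and>
               (\<forall>a\<in>carrier G. A1 #>\<^bsub>G\<^esub> \<phi> a = padic_mult (G Mod A1) \<alpha> (A1 #>\<^bsub>G\<^esub> a))))"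
    (is "?MF \<longleftrightarrow> ?FM")
proof
  have endo: "padic_endomorphism G \<alpha> \<phi>" if "padic_scalar \<alpha>" for \<alpha>
    using assms that
    by (intro padic_endomorphism.intro padic_multiplication.intro
        padic_multiplication_axioms.intro padic_endomorphism_axioms.intro)
  show "?MF \<Longrightarrow> ?FM"
    using padic_endomorphism.multiplication_modulo_finite_if_on_finite_index[OF endo]
    by metis
  show "?FM \<Longrightarrow> ?MF"
    using padic_endomorphism.multiplication_on_finite_index_if_modulo_finite[OF endo]
    by metis
qed

end
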